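(* Let $m\ge 1$ and $p_1,\dots,p_m\in\mathbb N$, $\mathfrak p:=\sum_{i=1}^m p_i$. For each $i$ let $\Theta_i\subset\mathbb R^{p_i}$ be a bounded convex set and $\Theta:=\Theta_1\times\cdots\times\Theta_m\subset\mathbb R^{\mathfrak p}$. Write $\theta=(\theta^1,\dots,\theta^m)'$ with $\theta^i=(\theta^i_1,\dots,\theta^i_{p_i})$. Let $\theta_0=(\theta_0^1,\dots,\theta_0^m)'\in\Theta$ (the true value), and for each $i$ let $p_i^0\in\{0,\dots,p_i\}$ be such that $\theta^i_{0,j}\neq 0$ for $1\le j\le p_i^0$ and $\theta^i_{0,j}=0$ for $p_i^0<j\le p_i$. On a probability space $(\Omega,\mathcal F,P)$, for each $n$ let $\tilde\theta_n=(\tilde\theta_n^1,\dots,\tilde\theta_n^m)'$ be an $\mathbb R^{\mathfrak p}$-valued random vector, let $\hat G_n$ be a $\mathfrak p\times\mathfrak p$ random matrix which is almost surely symmetric and positive definite, let $q_1,\dots,q_m\in(0,1]$, and let $\lambda^i_{n,j}$ ($1\le i\le m$, $1\le j\le p_i$) be positive real random variables. Define $$\mathcal F_n(\theta):=(\theta-\tilde\theta_n)'\hat G_n(\theta-\tilde\theta_n)+\sum_{i=1}^m\sum_{j=1}^{p_i}\lambda^i_{n,j}|\theta^i_j|^{q_i},$$ and let $\hat\theta_n=(\hat\theta_n^1,\dots,\hat\theta_n^m)'$ be any minimizer of $\mathcal F_n$ over the closure $\overline\Theta$ (the adaptive Bridge-type estimator). Let $r_n^1,\dots,r_n^m$ be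 sequences of positive numbers tending to $0$, and $A_n:=\mathrm{diag}(r_n^1\mathbf I_{p_1},\dots,r_n^m\mathbf I_{p_m})$. Set $\hat{\mathfrak D}_n:=A_n\hat G_nA_n$ and $a_n^i:=\max\{\lambda^i_{n,j}: j\le p_i^0\}$. Assume: (A1) there is a $\mathfrak p\times\mathfrak p$ positive definite symmetric random matrix $G$ with $\hat{\mathfrak D}_n\to G$ in probability; (A2) $A_n^{-1}(\tilde\theta_n-\theta_0)=O_p(1)$; (B1) $r_n^ia_n^i=O_p(1)$ for every $i=1,\dots,m$. Then $A_n^{-1}(\hat\theta_n-\theta_0)=O_p(1)$.
   Context: $\mathbf I_k$ denotes the $k\times k$ identity matrix. $O_p(1)$ means bounded in probability (tight) as $n\to\infty$. The components $\theta^i_{0,j}$ denote the $j$-th coordinate of $\theta^i_0$. *)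

theory Defs
  imports "HOL-Probability.Probability"
begin

text \<open>Vectors in R^{p_1+...+p_m} are represented as functions on the index set
  of pairs (i,j), i < m, j < p i (block i, coordinate j, both 0-based), which
  vanish outside this index set.\<close>

definition idx :: "nat \<Rightarrow> (nat \<Rightarrow> nat) \<Rightarrow> (nat \<times> nat) set" where
  "idx m p = Sigma {..<m} (\<lambda>i. {..<p i})"

definition vnorm :: "(nat \<times> nat) set \<Rightarrow> (nat \<times> nat \<Rightarrow> real) \<Rightarrow> real" where
  "vnorm I x = sqrt (\<Sum>a\<in>I. (x a)\<^sup>2)"

text \<open>Subsets of R^k: functions nat => real vanishing from index k on.\<close>
definition is_vec :: "nat \<Rightarrow> (nat \<Rightarrow> real) \<Rightarrow> bool" where
  "is_vec k x \<longleftrightarrow> (\<forall>j\<ge>k. x j = 0)"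

definition convex_vec :: "(nat \<Rightarrow> real) set \<Rightarrow> bool" where
  "convex_vec S \<longleftrightarrow> (\<forall>x\<in>S. \<forall>y\<in>S. \<forall>t::real. 0 \<le> t \<and> t \<le> 1 \<longrightarrow>
      (\<lambda>j. t * x j + (1 - t) * y j) \<in> S)"

definition bounded_vec :: "nat \<Rightarrow> (nat \<Rightarrow> real) set \<Rightarrow> bool" where
  "bounded_vec k S \<longleftrightarrow> (\<exists>B. \<forall>x\<in>S. \<forall>j<k. \<bar>x j\<bar> \<le> B)"

definition theta_prod :: "nat \<Rightarrow> (nat \<Rightarrow> nat) \<Rightarrow> (nat \<Rightarrow> (nat \<Rightarrow> real) set)
    \<Rightarrow> (nat \<times> nat \<Rightarrow> real) set" where
  "theta_prod m p Th = {\<theta>. (\<forall>i<m. (\<lambda>j. \<theta> (i, j)) \<in> Th i) \<and>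
      (\<forall>a. a \<notin> idx m p \<longrightarrow> \<theta> a = 0)}"

definition vclosure :: "(nat \<times> nat) set \<Rightarrow> (nat \<times> nat \<Rightarrow> real) set \<Rightarrow> (nat \<times> nat \<Rightarrow> real) set" where
  "vclosure I S = {x. (\<forall>a. a \<notin> I \<longrightarrow> x a = 0) \<and>
      (\<forall>e>0. \<exists>y\<in>S. vnorm I (\<lambda>a. x a - y a) < e)}"

definition sym_mat :: "(nat \<times> nat) set \<Rightarrow> (nat \<times> nat \<Rightarrow> nat \<times> nat \<Rightarrow> real) \<Rightarrow> bool" where
  "sym_mat I G \<longleftrightarrow> (\<forall>a\<in>I. \<forall>b\<in>I. G a b = G b a)"

definition qform :: "(nat \<times> nat) set \<Rightarrow> (nat \<times> nat \<Rightarrow> nat \<times> nat \<Rightarrow> real)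
    \<Rightarrow> (nat \<times> nat \<Rightarrow> real) \<Rightarrow> real" where
  "qform I G x = (\<Sum>a\<in>I. \<Sum>b\<in>I. x a * G a b * x b)"

definition posdef_mat :: "(nat \<times> nat) set \<Rightarrow> (nat \<times> nat \<Rightarrow> nat \<times> nat \<Rightarrow> real) \<Rightarrow> bool" where
  "posdef_mat I G \<longleftrightarrow> sym_mat I G \<and>
     (\<forall>x. (\<exists>a\<in>I. x a \<noteq> 0) \<longrightarrow> qform I G x > 0)"

definition bounded_in_prob :: "'w measure \<Rightarrow> (nat \<Rightarrow> 'w \<Rightarrow> real) \<Rightarrow> bool" where
  "bounded_in_prob M X \<longleftrightarrow> (\<forall>n. X n \<in> borel_measurable M) \<and>
     (\<forall>e>0. \<exists>K. \<exists>N. \<forall>n\<ge>N. measure M {\<omega> \<in> space M. \<bar>X n \<omega>\<bar> > K} \<le> e)"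

definition conv_in_prob :: "'w measure \<Rightarrow> (nat \<Rightarrow> 'w \<Rightarrow> real) \<Rightarrow> ('w \<Rightarrow> real) \<Rightarrow> bool" where
  "conv_in_prob M X Y \<longleftrightarrow> (\<forall>n. X n \<in> borel_measurable M) \<and> Y \<in> borel_measurable M \<and>
     (\<forall>e>0. (\<lambda>n. measure M {\<omega> \<in> space M. \<bar>X n \<omega> - Y \<omega>\<bar> > e}) \<longlonglongrightarrow> 0)"

definition bridge_obj :: "nat \<Rightarrow> (nat \<Rightarrow> nat) \<Rightarrow> (nat \<Rightarrow> real)
   \<Rightarrow> (nat \<times> nat \<Rightarrow> nat \<times> nat \<Rightarrow> real) \<Rightarrow> (nat \<times> nat \<Rightarrow> real)
   \<Rightarrow> (nat \<Rightarrow> nat \<Rightarrow> real) \<Rightarrow> (nat \<times> nat \<Rightarrow> real) \<Rightarrow> real" where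
  "bridge_obj m p q G tt lam \<theta> =
     qform (idx m p) G (\<lambda>a. \<theta> a - tt a) +
     (\<Sum>i<m. \<Sum>j<p i. lam i j * \<bar>\<theta> (i, j)\<bar> powr q i)"

text \<open>a_n^i = max of lambda^i_{n,j} over j < p0 i (0 if p0 i = 0, i.e. empty max).\<close>
definition amax :: "(nat \<Rightarrow> real) \<Rightarrow> nat \<Rightarrow> real" where
  "amax lam k = Max (insert 0 (lam ` {..<k}))"

end

theory Submission
  imports Defs
begin

text \<open>
  Write \<open>u = A\<^sub>n\<^sup>-\<^sup>1(\<theta>\<^sub>n - \<theta>\<^sub>0)\<close> for the rescaled error of the estimator, \<open>v\<close> for that of the
  pilot estimator and \<open>D = A\<^sub>n G\<^sub>n A\<^sub>n\<close>. Comparing the objective at the minimiser with its value at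
  \<open>\<theta>\<^sub>0\<close> gives \<open>u'Du - 2u'Dv \<le>\<close> (penalty at \<open>\<theta>\<^sub>0\<close>) \<open>-\<close> (penalty at the minimiser). By concavity of
  \<open>t \<mapsto> \<bar>t\<bar>\<^sup>q\<close> this penalty difference is at most \<open>\<bar>u\<bar>\<close> times a sum of terms
  \<open>\<bar>\<theta>\<^sup>i\<^sub>0\<^sub>,\<^sub>j\<bar>\<^sup>q\<^sup>-\<^sup>1 r\<^sup>i\<^sub>n a\<^sup>i\<^sub>n\<close> over the nonzero coordinates only. If \<open>G\<close> is \<open>c\<close>-coercive and \<open>D\<close> is within
  \<open>c/2\<close> of \<open>G\<close> entrywise in \<open>\<ell>\<^sub>1\<close>, then \<open>u'Du \<ge> c\<bar>u\<bar>\<^sup>2/2\<close>, so \<open>c\<bar>u\<bar>\<close> is bounded by a combination of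
  \<open>\<bar>v\<bar>\<close>, the entries of \<open>G\<close> and the \<open>r\<^sup>i\<^sub>n a\<^sup>i\<^sub>n\<close>, all \<open>O\<^sub>p(1)\<close> by (A2) and (B1). The constant \<open>c\<close> can be
  taken as \<open>1/\<kappa>\<close> for a measurable, hence tight, \<open>\<kappa>\<close>, and by (A1) the event on which \<open>D\<close> is that
  close to \<open>G\<close> has probability tending to one.
\<close>

section \<open>Quadratic forms on a finite index set\<close>

lemma vnorm_nonneg: "0 \<le> vnorm I x"
  unfolding vnorm_def by (simp add: sum_nonneg)

lemma vnorm_power2: "(vnorm I x)\<^sup>2 = (\<Sum>a\<in>I. (x a)\<^sup>2)"
  unfolding vnorm_def by (simp add: sum_nonneg)

lemma abs_le_vnorm:
  assumes "finite I" "a \<in> I"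
  shows "\<bar>x a\<bar> \<le> vnorm I x"
proof -
  have "(x a)\<^sup>2 \<le> (vnorm I x)\<^sup>2"
    unfolding vnorm_power2 using assms by (intro member_le_sum) auto
  then show ?thesis using vnorm_nonneg by (metis abs_le_square_iff abs_of_nonneg)
qed

lemma vnorm_eq_0_iff:
  assumes "finite I"
  shows "vnorm I x = 0 \<longleftrightarrow> (\<forall>a\<in>I. x a = 0)"
  using assms by (simp add: vnorm_def sum_nonneg sum_nonneg_eq_0_iff)

lemma vnorm_scale: "vnorm I (\<lambda>a. t * x a) = \<bar>t\<bar> * vnorm I x"
  unfolding vnorm_def
  by (simp add: power_mult_distrib sum_distrib_left[symmetric] real_sqrt_mult)

lemma qform_scale: "qform I G (\<lambda>a. t * x a) = t\<^sup>2 * qform I G x"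
  unfolding qform_def by (simp add: sum_distrib_left power2_eq_square algebra_simps)

lemma qform_uminus: "qform I G (\<lambda>a. - x a) = qform I G x"
  using qform_scale[of I G "-1" x] by simp

lemma qform_rescale:
  assumes "\<And>a. a \<in> I \<Longrightarrow> w a = \<rho> a * z a"
  shows "qform I G w = qform I (\<lambda>a b. \<rho> a * G a b * \<rho> b) z"
  unfolding qform_def using assms by (intro sum.cong refl) (auto simp: algebra_simps)

lemma qform_diff:
  "qform I G (\<lambda>a. u a - v a) =
     qform I G u - (\<Sum>a\<in>I. \<Sum>b\<in>I. u a * G a b * v b) - (\<Sum>a\<in>I. \<Sum>b\<in>I. v a * G a b * u b)
     + qform I G v"
  unfolding qform_def
  by (simp add: sum_subtractf[symmetric] sum.distrib[symmetric] algebra_simps)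

definition mat_l1 :: "(nat \<times> nat) set \<Rightarrow> (nat \<times> nat \<Rightarrow> nat \<times> nat \<Rightarrow> real) \<Rightarrow> real" where
  "mat_l1 I G = (\<Sum>a\<in>I. \<Sum>b\<in>I. \<bar>G a b\<bar>)"

lemma mat_l1_nonneg: "0 \<le> mat_l1 I G"
  unfolding mat_l1_def by (intro sum_nonneg) auto

lemma mat_l1_add_le: "mat_l1 I (\<lambda>a b. G a b + H a b) \<le> mat_l1 I G + mat_l1 I H"
  unfolding mat_l1_def by (simp add: sum.distrib[symmetric] sum_mono abs_triangle_ineq)

lemma abs_bilinear_le:
  assumes "finite I"
  shows "\<bar>\<Sum>a\<in>I. \<Sum>b\<in>I. u a * G a b * v b\<bar> \<le> mat_l1 I G * vnorm I u * vnorm I v"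
proof -
  have "\<bar>\<Sum>a\<in>I. \<Sum>b\<in>I. u a * G a b * v b\<bar> \<le> (\<Sum>a\<in>I. \<Sum>b\<in>I. \<bar>u a * G a b * v b\<bar>)"
    by (rule order_trans[OF sum_abs sum_mono[OF sum_abs]])
  also have "\<dots> \<le> (\<Sum>a\<in>I. \<Sum>b\<in>I. \<bar>G a b\<bar> * (vnorm I u * vnorm I v))"
  proof (intro sum_mono)
    fix a b assume "a \<in> I" "b \<in> I"
    then have uv: "\<bar>u a\<bar> * \<bar>v b\<bar> \<le> vnorm I u * vnorm I v"
      using assms by (intro mult_mono abs_le_vnorm vnorm_nonneg) auto
    show "\<bar>u a * G a b * v b\<bar> \<le> \<bar>G a b\<bar> * (vnorm I u * vnorm I v)"
      using mult_right_mono[OF uv abs_ge_zero[of "G a b"]] by (simp add: abs_mult ac_simps)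
  qed
  also have "\<dots> = mat_l1 I G * vnorm I u * vnorm I v"
    by (simp add: mat_l1_def sum_distrib_right mult.assoc)
  finally show ?thesis .
qed

lemma tendsto_vnorm:
  assumes "\<And>a. a \<in> I \<Longrightarrow> (\<lambda>n. x n a) \<longlonglongrightarrow> y a"
  shows "(\<lambda>n. vnorm I (x n)) \<longlonglongrightarrow> vnorm I y"
  unfolding vnorm_def by (intro tendsto_real_sqrt tendsto_sum tendsto_power assms)

lemma tendsto_qform:
  assumes "\<And>a. a \<in> I \<Longrightarrow> (\<lambda>n. x n a) \<longlonglongrightarrow> y a"
  shows "(\<lambda>n. qform I G (x n)) \<longlonglongrightarrow> qform I G y"
  unfolding qform_def by (intro tendsto_sum tendsto_mult tendsto_const assms)

section \<open>Coercivity\<close>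

definition coercive :: "(nat \<times> nat) set \<Rightarrow> real \<Rightarrow> (nat \<times> nat \<Rightarrow> nat \<times> nat \<Rightarrow> real) \<Rightarrow> bool" where
  "coercive I c G \<longleftrightarrow> (\<forall>x. c * (vnorm I x)\<^sup>2 \<le> qform I G x)"

lemma coercive_mono: "coercive I c G \<Longrightarrow> c' \<le> c \<Longrightarrow> coercive I c' G"
  unfolding coercive_def by (meson mult_right_mono order_trans zero_le_power2)

lemma coercive_perturb:
  assumes "finite I" "coercive I c G"
  shows "coercive I (c - mat_l1 I (\<lambda>a b. D a b - G a b)) D"
  unfolding coercive_def
proof
  fix x
  have "qform I D x - qform I G x = (\<Sum>a\<in>I. \<Sum>b\<in>I. x a * (D a b - G a b) * x b)"
    unfolding qform_def by (simp add: sum_subtractf[symmetric] algebra_simps)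
  also have "\<dots> \<ge> - (mat_l1 I (\<lambda>a b. D a b - G a b) * (vnorm I x)\<^sup>2)"
    using abs_bilinear_le[OF assms(1), of x "\<lambda>a b. D a b - G a b" x]
    by (simp add: power2_eq_square mult.assoc)
  finally show "(c - mat_l1 I (\<lambda>a b. D a b - G a b)) * (vnorm I x)\<^sup>2 \<le> qform I D x"
    using assms(2) unfolding coercive_def by (smt (verit) left_diff_distrib)
qed

lemma not_coercive_imp_unit_vec:
  assumes "finite I" "\<not> coercive I c G"
  shows "\<exists>z. vnorm I z = 1 \<and> qform I G z < c"
proof -
  obtain x where x: "qform I G x < c * (vnorm I x)\<^sup>2"
    using assms(2) unfolding coercive_def by (auto simp: not_le)
  have "vnorm I x \<noteq> 0"
  proof
    assume "vnorm I x = 0"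
    then have "qform I G x = 0" using assms(1) by (simp add: vnorm_eq_0_iff qform_def)
    with x \<open>vnorm I x = 0\<close> show False by simp
  qed
  then have pos: "0 < vnorm I x" using vnorm_nonneg[of I x] by linarith
  define z where "z = (\<lambda>a. x a / vnorm I x)"
  have "vnorm I z = 1" and qz: "qform I G z = qform I G x / (vnorm I x)\<^sup>2"
    using vnorm_scale[of I "1 / vnorm I x" x] qform_scale[of I G "1 / vnorm I x" x] pos
    by (simp_all add: z_def power_divide)
  moreover have "qform I G z < c" using x pos unfolding qz by (simp add: pos_divide_less_eq)
  ultimately show ?thesis by blast
qed

lemma bounded_family_convergent_subseq:
  fixes z :: "nat \<Rightarrow> 'a \<Rightarrow> real"
  assumes "finite I" "\<And>k a. a \<in> I \<Longrightarrow> \<bar>z k a\<bar> \<le> B"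
  shows "\<exists>s. strict_mono s \<and> (\<forall>a\<in>I. convergent (\<lambda>k. z (s k) a))"
  using assms
proof (induction I rule: finite_induct)
  case empty
  show ?case by (intro exI[of _ id]) (simp add: strict_mono_def)
next
  case (insert a F)
  then obtain s where s: "strict_mono s" "\<forall>b\<in>F. convergent (\<lambda>k. z (s k) b)" by auto
  obtain t where t: "strict_mono t" "monoseq (\<lambda>k. z (s (t k)) a)"
    using seq_monosub[of "\<lambda>k. z (s k) a"] by (auto simp: o_def)
  have "Bseq (\<lambda>k. z (s (t k)) a)"
    using insert.prems by (intro BseqI'[of _ B]) auto
  then have "convergent (\<lambda>k. z (s (t k)) a)" using t(2) by (rule Bseq_monoseq_convergent)
  moreover have "\<forall>b\<in>F. convergent (\<lambda>k. z (s (t k)) b)"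
    using s(2) convergent_subseq_convergent[OF _ t(1)] by (auto simp: o_def)
  ultimately show ?case using s(1) t(1) by (intro exI[of _ "s \<circ> t"]) (auto simp: strict_mono_def)
qed

lemma posdef_imp_coercive:
  assumes fin: "finite I" and pd: "posdef_mat I G"
  shows "\<exists>c>0. coercive I c G"
proof (rule ccontr)
  assume "\<not> ?thesis"
  then have "\<forall>k. \<exists>z. vnorm I z = 1 \<and> qform I G z < 1 / real (Suc k)"
    using not_coercive_imp_unit_vec[OF fin] by simp
  then obtain z where z1: "\<And>k. vnorm I (z k) = 1" and zq: "\<And>k. qform I G (z k) < 1 / real (Suc k)"
    by metis
  have "\<bar>z k a\<bar> \<le> 1" if "a \<in> I" for k a
    using abs_le_vnorm[OF fin that, of "z k"] z1 by simp
  then obtain s where s: "strict_mono s" "\<forall>a\<in>I. convergent (\<lambda>k. z (s k) a)"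
    using bounded_family_convergent_subseq[OF fin] by blast
  define y where "y a = lim (\<lambda>k. z (s k) a)" for a
  have lim: "(\<lambda>k. z (s k) a) \<longlonglongrightarrow> y a" if "a \<in> I" for a
    using s(2) that unfolding y_def by (simp add: convergent_LIMSEQ_iff)
  have "(\<lambda>k. vnorm I (z (s k))) \<longlonglongrightarrow> vnorm I y" by (rule tendsto_vnorm[OF lim])
  then have "vnorm I y = 1" using z1 by (simp add: LIMSEQ_const_iff)
  then have "\<exists>a\<in>I. y a \<noteq> 0" by (metis vnorm_eq_0_iff[OF fin] zero_neq_one)
  moreover have "qform I G y \<le> 0"
  proof (rule LIMSEQ_le[OF tendsto_qform[OF lim]])
    have "(\<lambda>k. 1 / real (Suc k)) \<longlonglongrightarrow> 0" by (rule LIMSEQ_Suc[OF lim_inverse_n'])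
    then show "(\<lambda>k. 1 / real (Suc (s k))) \<longlonglongrightarrow> 0"
      using LIMSEQ_subseq_LIMSEQ[OF _ s(1)] by (simp add: o_def)
    show "\<exists>N. \<forall>k\<ge>N. qform I G (z (s k)) \<le> 1 / real (Suc (s k))"
      using zq less_imp_le by blast
  qed
  ultimately show False using pd unfolding posdef_mat_def by force
qed

lemma coercive_iff_rational:
  assumes fin: "finite I"
  shows "coercive I c G \<longleftrightarrow> (\<forall>x\<in>PiE I (\<lambda>_. \<rat>). c * (vnorm I x)\<^sup>2 \<le> qform I G x)"
proof
  assume rat: "\<forall>x\<in>PiE I (\<lambda>_. \<rat>). c * (vnorm I x)\<^sup>2 \<le> qform I G x"
  show "coercive I c G"
    unfolding coercive_def
  proof
    fix x :: "nat \<times> nat \<Rightarrow> real"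
    have "\<exists>r. (\<forall>n. r n \<in> \<rat>) \<and> r \<longlonglongrightarrow> x a" for a
      using closure_sequential[of "x a" "\<rat> :: real set"] by (simp add: Rats_closure_real)
    then obtain r where r: "\<And>a n. r a n \<in> \<rat>" "\<And>a. r a \<longlonglongrightarrow> x a" by metis
    define y where "y n = restrict (\<lambda>a. r a n) I" for n
    have lim: "(\<lambda>n. y n a) \<longlonglongrightarrow> x a" if "a \<in> I" for a
      using r(2)[of a] that by (simp add: y_def)
    show "c * (vnorm I x)\<^sup>2 \<le> qform I G x"
    proof (rule LIMSEQ_le)
      show "(\<lambda>n. c * (vnorm I (y n))\<^sup>2) \<longlonglongrightarrow> c * (vnorm I x)\<^sup>2"
        by (intro tendsto_mult tendsto_const tendsto_power tendsto_vnorm lim)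
      show "(\<lambda>n. qform I G (y n)) \<longlonglongrightarrow> qform I G x" by (rule tendsto_qform[OF lim])
      show "\<exists>N. \<forall>n\<ge>N. c * (vnorm I (y n))\<^sup>2 \<le> qform I G (y n)"
        using rat r(1) by (auto simp: y_def)
    qed
  qed
qed (auto simp: coercive_def)

lemma sets_coercive:
  fixes G :: "'w \<Rightarrow> nat \<times> nat \<Rightarrow> nat \<times> nat \<Rightarrow> real"
  assumes "finite I" "\<And>a b. a \<in> I \<Longrightarrow> b \<in> I \<Longrightarrow> (\<lambda>\<omega>. G \<omega> a b) \<in> borel_measurable M"
  shows "{\<omega> \<in> space M. coercive I c (G \<omega>)} \<in> sets M"
  unfolding coercive_iff_rational[OF assms(1)] qform_def
  using assms by (intro sets.sets_Collect_countable_All' countable_PiE countable_rat borel_measurable_le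
      borel_measurable_const borel_measurable_sum borel_measurable_times) auto

text \<open>\<open>\<kappa>\<close> takes values in \<open>1, 2, 3, \<dots>\<close>, so that its measurability reduces to that of the events
  \<open>coercive I (1 / k) (G \<omega>)\<close>.\<close>

lemma random_coercivity_modulus:
  fixes G :: "'w \<Rightarrow> nat \<times> nat \<Rightarrow> nat \<times> nat \<Rightarrow> real"
  assumes fin: "finite I"
    and meas: "\<And>a b. a \<in> I \<Longrightarrow> b \<in> I \<Longrightarrow> (\<lambda>\<omega>. G \<omega> a b) \<in> borel_measurable M"
    and pd: "\<And>\<omega>. \<omega> \<in> space M \<Longrightarrow> posdef_mat I (G \<omega>)"
  obtains \<kappa> where "\<kappa> \<in> borel_measurable M" "\<And>\<omega>. \<omega> \<in> space M \<Longrightarrow> 1 \<le> \<kappa> \<omega>"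
    "\<And>\<omega>. \<omega> \<in> space M \<Longrightarrow> coercive I (1 / \<kappa> \<omega>) (G \<omega>)"
proof
  define k where "k \<omega> = (LEAST k. coercive I (1 / real (Suc k)) (G \<omega>))" for \<omega>
  have "k \<in> measurable M (count_space UNIV)"
    unfolding k_def using sets_coercive[OF fin meas] by (intro measurable_Least) (simp add: pred_def)
  then show "(\<lambda>\<omega>. real (Suc (k \<omega>))) \<in> borel_measurable M" by simp
  fix \<omega> assume "\<omega> \<in> space M"
  then obtain c where "0 < c" "coercive I c (G \<omega>)" using posdef_imp_coercive[OF fin pd] by blast
  moreover obtain j where "inverse (real (Suc j)) < c" using reals_Archimedean[OF \<open>0 < c\<close>] by blast
  ultimately have "coercive I (1 / real (Suc j)) (G \<omega>)" by (auto intro: coercive_mono simp: inverse_eq_divide)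
  then show "coercive I (1 / real (Suc (k \<omega>))) (G \<omega>)" unfolding k_def by (rule LeastI)
qed simp

section \<open>Boundedness and convergence in probability\<close>

lemma (in finite_measure) measure_le_add_if_AE_subset:
  assumes "AE \<omega> in M. \<omega> \<in> A \<longrightarrow> \<omega> \<in> B \<or> \<omega> \<in> C" "B \<in> sets M" "C \<in> sets M"
  shows "measure M A \<le> measure M B + measure M C"
proof -
  have "measure M A \<le> measure M (B \<union> C)"
    using assms by (intro finite_measure_mono_AE) auto
  also have "\<dots> \<le> measure M B + measure M C" using assms(2,3) by (rule measure_Un_le)
  finally show ?thesis .
qed

lemma borel_measurable_vnorm:
  assumes "\<And>a. a \<in> I \<Longrightarrow> (\<lambda>\<omega>. f \<omega> a) \<in> borel_measurable M"
  shows "(\<lambda>\<omega>. vnorm I (f \<omega>)) \<in> borel_measurable M"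
  unfolding vnorm_def using assms
  by (intro measurable_compose[OF _ borel_measurable_sqrt] borel_measurable_sum borel_measurable_power)

lemma sets_abs_gt:
  fixes f :: "'w \<Rightarrow> real"
  shows "f \<in> borel_measurable M \<Longrightarrow> {\<omega> \<in> space M. K < \<bar>f \<omega>\<bar>} \<in> sets M"
  by measurable

lemma bounded_in_probD:
  assumes "prob_space M" "bounded_in_prob M X" "0 < e"
  obtains K N where "0 < K" "\<And>n. N \<le> n \<Longrightarrow> measure M {\<omega> \<in> space M. K < \<bar>X n \<omega>\<bar>} \<le> e"
proof -
  interpret prob_space M by fact
  have meas: "X n \<in> borel_measurable M" for n
    using assms(2) by (simp add: bounded_in_prob_def)
  have "\<exists>K N. \<forall>n\<ge>N. measure M {\<omega> \<in> space M. K < \<bar>X n \<omega>\<bar>} \<le> e"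
    using assms(2,3) by (simp add: bounded_in_prob_def)
  then obtain K N where KN: "\<And>n. N \<le> n \<Longrightarrow> measure M {\<omega> \<in> space M. K < \<bar>X n \<omega>\<bar>} \<le> e"
    by blast
  have "measure M {\<omega> \<in> space M. max K 1 < \<bar>X n \<omega>\<bar>} \<le> measure M {\<omega> \<in> space M. K < \<bar>X n \<omega>\<bar>}" for n
    by (rule finite_measure_mono) (auto intro: sets_abs_gt meas)
  then show ?thesis using KN by (intro that[of "max K 1"]) (auto intro: order_trans)
qed

lemma bounded_in_prob_const:
  assumes "prob_space M" "Y \<in> borel_measurable M"
  shows "bounded_in_prob M (\<lambda>n. Y)"
proof -
  interpret prob_space M by fact
  define A where "A k = {\<omega> \<in> space M. real k < \<bar>Y \<omega>\<bar>}" for k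
  have "range A \<subseteq> sets M" unfolding A_def using sets_abs_gt[OF assms(2)] by auto
  moreover have "decseq A" unfolding decseq_def A_def by auto
  ultimately have "(\<lambda>k. measure M (A k)) \<longlonglongrightarrow> measure M (\<Inter>k. A k)"
    by (rule finite_Lim_measure_decseq)
  moreover have "(\<Inter>k. A k) = {}"
    unfolding A_def by (auto simp: not_less[symmetric]) (meson real_arch_simple not_le)
  ultimately have "(\<lambda>k. measure M (A k)) \<longlonglongrightarrow> 0" by simp
  then have "eventually (\<lambda>k. measure M (A k) < e) sequentially" if "0 < e" for e
    using that by (rule order_tendstoD)
  then have "\<exists>k. measure M (A k) \<le> e" if "0 < e" for e
    using that by (metis eventually_sequentially less_imp_le order.refl)
  then show ?thesis using assms(2) unfolding bounded_in_prob_def A_def by blast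
qed


lemma bounded_in_prob_add:
  assumes M: "prob_space M" and X: "bounded_in_prob M X" and Y: "bounded_in_prob M Y"
  shows "bounded_in_prob M (\<lambda>n \<omega>. X n \<omega> + Y n \<omega>)"
  unfolding bounded_in_prob_def
proof (intro conjI allI impI)
  interpret prob_space M by fact
  show "(\<lambda>\<omega>. X n \<omega> + Y n \<omega>) \<in> borel_measurable M" for n
    using X Y unfolding bounded_in_prob_def by (auto intro!: borel_measurable_add)
  fix e :: real assume "0 < e"
  then have "0 < e / 2" by simp
  obtain K1 N1 where "0 < K1"
    and K1: "\<And>n. N1 \<le> n \<Longrightarrow> measure M {\<omega> \<in> space M. K1 < \<bar>X n \<omega>\<bar>} \<le> e / 2"
    using bounded_in_probD[OF M X \<open>0 < e / 2\<close>] by blast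
  obtain K2 N2 where "0 < K2"
    and K2: "\<And>n. N2 \<le> n \<Longrightarrow> measure M {\<omega> \<in> space M. K2 < \<bar>Y n \<omega>\<bar>} \<le> e / 2"
    using bounded_in_probD[OF M Y \<open>0 < e / 2\<close>] by blast
  have "measure M {\<omega> \<in> space M. K1 + K2 < \<bar>X n \<omega> + Y n \<omega>\<bar>} \<le> e" if "max N1 N2 \<le> n" for n
  proof -
    have "measure M {\<omega> \<in> space M. K1 + K2 < \<bar>X n \<omega> + Y n \<omega>\<bar>}
        \<le> measure M {\<omega> \<in> space M. K1 < \<bar>X n \<omega>\<bar>} + measure M {\<omega> \<in> space M. K2 < \<bar>Y n \<omega>\<bar>}"
      using X Y unfolding bounded_in_prob_def
      by (intro measure_le_add_if_AE_subset AE_I2 sets_abs_gt) auto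
    then show ?thesis using K1[of n] K2[of n] that by simp
  qed
  then show "\<exists>K N. \<forall>n\<ge>N. measure M {\<omega> \<in> space M. K < \<bar>X n \<omega> + Y n \<omega>\<bar>} \<le> e" by blast
qed

lemma bounded_in_prob_mult:
  assumes M: "prob_space M" and X: "bounded_in_prob M X" and Y: "bounded_in_prob M Y"
  shows "bounded_in_prob M (\<lambda>n \<omega>. X n \<omega> * Y n \<omega>)"
  unfolding bounded_in_prob_def
proof (intro conjI allI impI)
  interpret prob_space M by fact
  show "(\<lambda>\<omega>. X n \<omega> * Y n \<omega>) \<in> borel_measurable M" for n
    using X Y unfolding bounded_in_prob_def by (auto intro!: borel_measurable_times)
  fix e :: real assume "0 < e"
  then have "0 < e / 2" by simp
  obtain K1 N1 where "0 < K1"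
    and K1: "\<And>n. N1 \<le> n \<Longrightarrow> measure M {\<omega> \<in> space M. K1 < \<bar>X n \<omega>\<bar>} \<le> e / 2"
    using bounded_in_probD[OF M X \<open>0 < e / 2\<close>] by blast
  obtain K2 N2 where "0 < K2"
    and K2: "\<And>n. N2 \<le> n \<Longrightarrow> measure M {\<omega> \<in> space M. K2 < \<bar>Y n \<omega>\<bar>} \<le> e / 2"
    using bounded_in_probD[OF M Y \<open>0 < e / 2\<close>] by blast
  have "measure M {\<omega> \<in> space M. K1 * K2 < \<bar>X n \<omega> * Y n \<omega>\<bar>} \<le> e" if "max N1 N2 \<le> n" for n
  proof -
    have "\<bar>X n \<omega> * Y n \<omega>\<bar> \<le> K1 * K2" if "\<bar>X n \<omega>\<bar> \<le> K1" "\<bar>Y n \<omega>\<bar> \<le> K2" for \<omega>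
      using that by (simp add: abs_mult mult_mono')
    then have "measure M {\<omega> \<in> space M. K1 * K2 < \<bar>X n \<omega> * Y n \<omega>\<bar>}
        \<le> measure M {\<omega> \<in> space M. K1 < \<bar>X n \<omega>\<bar>} + measure M {\<omega> \<in> space M. K2 < \<bar>Y n \<omega>\<bar>}"
      using X Y unfolding bounded_in_prob_def
      by (intro measure_le_add_if_AE_subset AE_I2 sets_abs_gt) (auto simp: not_less[symmetric])
    then show ?thesis using K1[of n] K2[of n] that by simp
  qed
  then show "\<exists>K N. \<forall>n\<ge>N. measure M {\<omega> \<in> space M. K < \<bar>X n \<omega> * Y n \<omega>\<bar>} \<le> e" by blast
qed

lemma bounded_in_prob_sum:
  assumes M: "prob_space M" and "finite J" "\<And>k. k \<in> J \<Longrightarrow> bounded_in_prob M (X k)"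
  shows "bounded_in_prob M (\<lambda>n \<omega>. \<Sum>k\<in>J. X k n \<omega>)"
  using assms(2,3)
proof (induction J rule: finite_induct)
  case empty
  show ?case using bounded_in_prob_const[OF M, of "\<lambda>_. 0"] by simp
next
  case (insert k J)
  then show ?case using bounded_in_prob_add[OF M, of "X k"] by simp
qed

lemma bounded_in_prob_if_AE_le:
  assumes M: "prob_space M" and X: "\<And>n. X n \<in> borel_measurable M" and Y: "bounded_in_prob M Y"
    and B: "\<And>n. B n \<in> sets M" "(\<lambda>n. measure M (B n)) \<longlonglongrightarrow> 0"
    and le: "\<And>n. AE \<omega> in M. \<omega> \<notin> B n \<longrightarrow> \<bar>X n \<omega>\<bar> \<le> Y n \<omega>"
  shows "bounded_in_prob M X"
  unfolding bounded_in_prob_def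
proof (intro conjI allI impI)
  interpret prob_space M by fact
  show "X n \<in> borel_measurable M" for n by (rule X)
  fix e :: real assume "0 < e"
  then have "0 < e / 2" by simp
  obtain K N1 where "0 < K"
    and K: "\<And>n. N1 \<le> n \<Longrightarrow> measure M {\<omega> \<in> space M. K < \<bar>Y n \<omega>\<bar>} \<le> e / 2"
    using bounded_in_probD[OF M Y \<open>0 < e / 2\<close>] by blast
  have "eventually (\<lambda>n. measure M (B n) < e / 2) sequentially"
    using B(2) \<open>0 < e / 2\<close> by (rule order_tendstoD)
  then obtain N2 where N2: "\<And>n. N2 \<le> n \<Longrightarrow> measure M (B n) < e / 2"
    by (auto simp: eventually_sequentially)
  have "measure M {\<omega> \<in> space M. K < \<bar>X n \<omega>\<bar>} \<le> e" if "max N1 N2 \<le> n" for n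
  proof -
    have "AE \<omega> in M. \<omega> \<in> {\<omega> \<in> space M. K < \<bar>X n \<omega>\<bar>} \<longrightarrow>
        \<omega> \<in> {\<omega> \<in> space M. K < \<bar>Y n \<omega>\<bar>} \<or> \<omega> \<in> B n"
      using le[of n] by eventually_elim auto
    then have "measure M {\<omega> \<in> space M. K < \<bar>X n \<omega>\<bar>} \<le> measure M {\<omega> \<in> space M. K < \<bar>Y n \<omega>\<bar>} + measure M (B n)"
      using Y B(1) unfolding bounded_in_prob_def by (intro measure_le_add_if_AE_subset sets_abs_gt) auto
    then show ?thesis using K[of n] N2[of n] that by simp
  qed
  then show "\<exists>K N. \<forall>n\<ge>N. measure M {\<omega> \<in> space M. K < \<bar>X n \<omega>\<bar>} \<le> e" by blast
qed

lemma conv_in_prob_abs_diff: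
  "conv_in_prob M X Y \<Longrightarrow> conv_in_prob M (\<lambda>n \<omega>. \<bar>X n \<omega> - Y \<omega>\<bar>) (\<lambda>_. 0)"
  unfolding conv_in_prob_def by (auto intro!: borel_measurable_abs borel_measurable_diff)

lemma conv_in_prob_zero_add:
  assumes M: "prob_space M" and X: "conv_in_prob M X (\<lambda>_. 0)" and Y: "conv_in_prob M Y (\<lambda>_. 0)"
  shows "conv_in_prob M (\<lambda>n \<omega>. X n \<omega> + Y n \<omega>) (\<lambda>_. 0)"
  unfolding conv_in_prob_def
proof (intro conjI allI impI)
  interpret prob_space M by fact
  show "(\<lambda>\<omega>. X n \<omega> + Y n \<omega>) \<in> borel_measurable M" for n
    using X Y unfolding conv_in_prob_def by (auto intro!: borel_measurable_add)
  show "(\<lambda>_. 0) \<in> borel_measurable M" by simp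
  fix e :: real assume "0 < e"
  then have "0 < e / 2" by simp
  then have "(\<lambda>n. measure M {\<omega> \<in> space M. e / 2 < \<bar>X n \<omega>\<bar>}) \<longlonglongrightarrow> 0"
    and "(\<lambda>n. measure M {\<omega> \<in> space M. e / 2 < \<bar>Y n \<omega>\<bar>}) \<longlonglongrightarrow> 0"
    using X Y unfolding conv_in_prob_def diff_zero by blast+
  from tendsto_add[OF this] have lim: "(\<lambda>n. measure M {\<omega> \<in> space M. e / 2 < \<bar>X n \<omega>\<bar>}
      + measure M {\<omega> \<in> space M. e / 2 < \<bar>Y n \<omega>\<bar>}) \<longlonglongrightarrow> 0"
    by simp
  have "measure M {\<omega> \<in> space M. e < \<bar>X n \<omega> + Y n \<omega>\<bar>}
      \<le> measure M {\<omega> \<in> space M. e / 2 < \<bar>X n \<omega>\<bar>} + measure M {\<omega> \<in> space M. e / 2 < \<bar>Y n \<omega>\<bar>}" for n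
    using X Y unfolding conv_in_prob_def
    by (intro measure_le_add_if_AE_subset AE_I2 sets_abs_gt) auto
  then show "(\<lambda>n. measure M {\<omega> \<in> space M. e < \<bar>X n \<omega> + Y n \<omega> - 0\<bar>}) \<longlonglongrightarrow> 0"
    by (intro tendsto_sandwich[OF _ _ tendsto_const lim]) auto
qed

lemma conv_in_prob_zero_sum:
  assumes M: "prob_space M" and "finite J" "\<And>k. k \<in> J \<Longrightarrow> conv_in_prob M (X k) (\<lambda>_. 0)"
  shows "conv_in_prob M (\<lambda>n \<omega>. \<Sum>k\<in>J. X k n \<omega>) (\<lambda>_. 0)"
  using assms(2,3)
proof (induction J rule: finite_induct)
  case empty
  show ?case by (simp add: conv_in_prob_def)
next
  case (insert k J)
  then show ?case using conv_in_prob_zero_add[OF M, of "X k"] by simp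
qed

lemma conv_in_prob_zero_mult_bounded:
  assumes M: "prob_space M" and Y: "bounded_in_prob M Y" and X: "conv_in_prob M X (\<lambda>_. 0)"
  shows "conv_in_prob M (\<lambda>n \<omega>. Y n \<omega> * X n \<omega>) (\<lambda>_. 0)"
  unfolding conv_in_prob_def
proof (intro conjI allI impI)
  interpret prob_space M by fact
  show meas: "(\<lambda>\<omega>. Y n \<omega> * X n \<omega>) \<in> borel_measurable M" for n
    using X Y unfolding conv_in_prob_def bounded_in_prob_def by (auto intro!: borel_measurable_times)
  show "(\<lambda>_. 0) \<in> borel_measurable M" by simp
  fix \<eta> :: real assume "0 < \<eta>"
  show "(\<lambda>n. measure M {\<omega> \<in> space M. \<eta> < \<bar>Y n \<omega> * X n \<omega> - 0\<bar>}) \<longlonglongrightarrow> 0"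
  proof (rule order_tendstoI)
    show "eventually (\<lambda>n. a < measure M {\<omega> \<in> space M. \<eta> < \<bar>Y n \<omega> * X n \<omega> - 0\<bar>}) sequentially"
      if "a < 0" for a
      using that by (intro always_eventually allI) (simp add: less_le_trans[OF _ measure_nonneg])
  next
    fix e :: real assume "0 < e"
    then have "0 < e / 2" by simp
    obtain K N where "0 < K"
      and K: "\<And>n. N \<le> n \<Longrightarrow> measure M {\<omega> \<in> space M. K < \<bar>Y n \<omega>\<bar>} \<le> e / 2"
      using bounded_in_probD[OF M Y \<open>0 < e / 2\<close>] by blast
    have "(\<lambda>n. measure M {\<omega> \<in> space M. \<eta> / K < \<bar>X n \<omega>\<bar>}) \<longlonglongrightarrow> 0"
      using X \<open>0 < \<eta>\<close> \<open>0 < K\<close> unfolding conv_in_prob_def by simp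
    then have small: "eventually (\<lambda>n. measure M {\<omega> \<in> space M. \<eta> / K < \<bar>X n \<omega>\<bar>} < e / 2) sequentially"
      using \<open>0 < e\<close> by (intro order_tendstoD) auto
    have split: "measure M {\<omega> \<in> space M. \<eta> < \<bar>Y n \<omega> * X n \<omega>\<bar>}
        \<le> measure M {\<omega> \<in> space M. K < \<bar>Y n \<omega>\<bar>} + measure M {\<omega> \<in> space M. \<eta> / K < \<bar>X n \<omega>\<bar>}" for n
    proof -
      have "\<bar>Y n \<omega> * X n \<omega>\<bar> \<le> \<eta>" if "\<bar>Y n \<omega>\<bar> \<le> K" "\<bar>X n \<omega>\<bar> \<le> \<eta> / K" for \<omega>
        using mult_mono'[OF that] \<open>0 < K\<close> by (simp add: abs_mult)
      then show ?thesis
        using X Y unfolding conv_in_prob_def bounded_in_prob_def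
        by (intro measure_le_add_if_AE_subset AE_I2 sets_abs_gt) (auto simp: not_less[symmetric])
    qed
    show "eventually (\<lambda>n. measure M {\<omega> \<in> space M. \<eta> < \<bar>Y n \<omega> * X n \<omega> - 0\<bar>} < e) sequentially"
      using small eventually_ge_at_top[of N]
    proof eventually_elim
      case (elim n)
      then show ?case using K[of n] split[of n] by simp
    qed
  qed
qed

section \<open>The bridge objective\<close>

lemma finite_idx: "finite (idx m p)"
  unfolding idx_def by auto

lemma mem_idx: "(i, j) \<in> idx m p \<longleftrightarrow> i < m \<and> j < p i"
  unfolding idx_def by auto

lemma amax_ge: "j < k \<Longrightarrow> l j \<le> amax l k"
  unfolding amax_def by (intro Max_ge) auto

lemma amax_nonneg: "0 \<le> amax l k"
  unfolding amax_def by (intro Max_ge) auto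

lemma rescaled_minimizer_bound:
  fixes \<rho> :: "nat \<times> nat \<Rightarrow> real" and pen :: "(nat \<times> nat \<Rightarrow> real) \<Rightarrow> real"
  assumes fin: "finite I" and \<rho>: "\<And>a. a \<in> I \<Longrightarrow> 0 < \<rho> a"
    and min: "qform I Gh (\<lambda>a. \<theta> a - tt a) + pen \<theta> \<le> qform I Gh (\<lambda>a. \<theta>0 a - tt a) + pen \<theta>0"
    and pen: "pen \<theta>0 - pen \<theta> \<le> W * vnorm I (\<lambda>a. (\<theta> a - \<theta>0 a) / \<rho> a)"
    and W: "0 \<le> W" and c: "0 < c" and G: "coercive I c G"
    and close: "mat_l1 I (\<lambda>a b. \<rho> a * Gh a b * \<rho> b - G a b) \<le> c / 2"
  shows "c * vnorm I (\<lambda>a. (\<theta> a - \<theta>0 a) / \<rho> a)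
    \<le> 2 * (2 * mat_l1 I G + c) * vnorm I (\<lambda>a. (tt a - \<theta>0 a) / \<rho> a) + 2 * W"
proof -
  define u v where "u = (\<lambda>a. (\<theta> a - \<theta>0 a) / \<rho> a)" and "v = (\<lambda>a. (tt a - \<theta>0 a) / \<rho> a)"
  define D where "D = (\<lambda>a b. \<rho> a * Gh a b * \<rho> b)"
  define U V where "U = vnorm I u" and "V = vnorm I v"
  define B where "B x y = (\<Sum>a\<in>I. \<Sum>b\<in>I. x a * D a b * y b)" for x y
  have U0: "0 \<le> U" and V0: "0 \<le> V" by (simp_all add: U_def V_def vnorm_nonneg)
  have \<rho>0: "\<rho> a \<noteq> 0" if "a \<in> I" for a using \<rho>[OF that] by simp
  have "qform I Gh (\<lambda>a. \<theta> a - tt a) = qform I D (\<lambda>a. u a - v a)"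
    unfolding D_def by (intro qform_rescale) (simp add: u_def v_def diff_divide_distrib[symmetric] \<rho>0)
  moreover have "qform I Gh (\<lambda>a. \<theta>0 a - tt a) = qform I D (\<lambda>a. - v a)"
    unfolding D_def by (intro qform_rescale) (simp add: v_def \<rho>0)
  ultimately have quad: "qform I D u - B u v - B v u \<le> W * U"
    using min pen[folded u_def, folded U_def] qform_diff[of I D u v] qform_uminus[of I D v]
    unfolding B_def by linarith
  have low: "c / 2 * U\<^sup>2 \<le> qform I D u"
  proof -
    have "coercive I (c - mat_l1 I (\<lambda>a b. D a b - G a b)) D" by (rule coercive_perturb[OF fin G])
    then have "coercive I (c / 2) D" by (rule coercive_mono) (use close in \<open>simp add: D_def\<close>)
    then show ?thesis unfolding coercive_def U_def by blast
  qed
  define S where "S = mat_l1 I G + c / 2"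
  have "mat_l1 I D \<le> S"
    using mat_l1_add_le[of I G "\<lambda>a b. D a b - G a b"] close unfolding D_def S_def by simp
  then have "mat_l1 I D * U * V \<le> S * U * V" using U0 V0 by (intro mult_right_mono) auto
  moreover have "\<bar>B u v\<bar> \<le> mat_l1 I D * U * V" and "\<bar>B v u\<bar> \<le> mat_l1 I D * U * V"
    using abs_bilinear_le[OF fin, of u D v] abs_bilinear_le[OF fin, of v D u]
    unfolding B_def U_def V_def by (simp_all add: ac_simps)
  ultimately have "c / 2 * U\<^sup>2 \<le> 2 * (S * U * V) + W * U"
    using quad low abs_ge_minus_self[of "B u v"] abs_ge_minus_self[of "B v u"] by linarith
  then have "c / 2 * U * U \<le> (2 * S * V + W) * U" by (simp add: power2_eq_square algebra_simps)
  moreover have "0 \<le> 2 * S * V + W" using mat_l1_nonneg[of I G] c V0 W by (simp add: S_def)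
  ultimately have "c / 2 * U \<le> 2 * S * V + W"
    using U0 by (cases "U = 0") (auto intro: mult_right_le_imp_le)
  then show ?thesis unfolding U_def V_def u_def v_def S_def by (simp add: algebra_simps)
qed

text \<open>Lipschitz constant at \<open>\<theta>0\<close> of the bridge penalty in the coordinates rescaled by \<open>\<rho>\<close>:
  only the nonzero coordinates of \<open>\<theta>0\<close> contribute, since \<open>t \<mapsto> \<bar>t\<bar> powr q\<close> has no finite slope at 0.\<close>

definition penalty_slope ::
    "nat \<Rightarrow> (nat \<Rightarrow> nat) \<Rightarrow> (nat \<Rightarrow> real) \<Rightarrow> (nat \<times> nat \<Rightarrow> real) \<Rightarrow> (nat \<Rightarrow> real)
      \<Rightarrow> (nat \<Rightarrow> nat \<Rightarrow> real) \<Rightarrow> real"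
  where "penalty_slope m p0 q \<theta>0 \<rho> lam =
    (\<Sum>i<m. \<Sum>j<p0 i. \<bar>\<theta>0 (i, j)\<bar> powr (q i - 1) * (\<rho> i * amax (lam i) (p0 i)))"

lemma penalty_slope_nonneg:
  "(\<And>i. i < m \<Longrightarrow> 0 < \<rho> i) \<Longrightarrow> 0 \<le> penalty_slope m p0 q \<theta>0 \<rho> lam"
  unfolding penalty_slope_def by (intro sum_nonneg mult_nonneg_nonneg amax_nonneg) (auto intro: less_imp_le)

lemma abs_powr_diff_le:
  fixes x y q :: real
  assumes "x \<noteq> 0" "0 < q" "q \<le> 1"
  shows "\<bar>x\<bar> powr q - \<bar>y\<bar> powr q \<le> \<bar>x\<bar> powr (q - 1) * \<bar>x - y\<bar>"
proof -
  define s t where "s = \<bar>x\<bar>" and "t = \<bar>y\<bar>"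
  have s: "0 < s" and t: "0 \<le> t" using assms by (auto simp: s_def t_def)
  have st: "s - t \<le> \<bar>x - y\<bar>" unfolding s_def t_def by linarith
  show ?thesis
  proof (cases "t < s")
    case False
    then have "s powr q \<le> t powr q" using s assms by (intro powr_mono2) auto
    then show ?thesis unfolding s_def t_def by (smt (verit) zero_le_mult_iff abs_ge_zero powr_ge_zero)
  next
    case True
    have "s powr (q - 1) * t \<le> t powr q"
    proof (cases "t = 0")
      case False
      then have "s powr (q - 1) * t \<le> t powr (q - 1) * t"
        using t True assms by (intro mult_right_mono powr_mono2') auto
      also have "\<dots> = t powr q" using t False by (simp add: powr_diff)
      finally show ?thesis .
    qed simp
    moreover have "s powr q = s powr (q - 1) * s" using s by (simp add: powr_diff)
    ultimately have "s powr q - t powr q \<le> s powr (q - 1) * (s - t)" by (simp add: algebra_simps)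
    also have "\<dots> \<le> s powr (q - 1) * \<bar>x - y\<bar>" using st by (intro mult_left_mono) auto
    finally show ?thesis unfolding s_def t_def .
  qed
qed

lemma bridge_penalty_decrease_le:
  fixes \<theta> \<theta>0 :: "nat \<times> nat \<Rightarrow> real" and \<rho> q :: "nat \<Rightarrow> real"
  assumes \<rho>: "\<And>i. i < m \<Longrightarrow> 0 < \<rho> i" and q: "\<And>i. i < m \<Longrightarrow> 0 < q i \<and> q i \<le> 1"
    and p0: "\<And>i. i < m \<Longrightarrow> p0 i \<le> p i"
    and nz: "\<And>i j. i < m \<Longrightarrow> j < p0 i \<Longrightarrow> \<theta>0 (i, j) \<noteq> 0"
    and z: "\<And>i j. i < m \<Longrightarrow> p0 i \<le> j \<Longrightarrow> j < p i \<Longrightarrow> \<theta>0 (i, j) = 0"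
    and lam: "\<And>i j. i < m \<Longrightarrow> j < p i \<Longrightarrow> 0 \<le> lam i j"
  shows "(\<Sum>i<m. \<Sum>j<p i. lam i j * \<bar>\<theta>0 (i, j)\<bar> powr q i) - (\<Sum>i<m. \<Sum>j<p i. lam i j * \<bar>\<theta> (i, j)\<bar> powr q i)
    \<le> penalty_slope m p0 q \<theta>0 \<rho> lam * vnorm (idx m p) (\<lambda>a. (\<theta> a - \<theta>0 a) / \<rho> (fst a))"
proof -
  define U where "U = vnorm (idx m p) (\<lambda>a. (\<theta> a - \<theta>0 a) / \<rho> (fst a))"
  define s where "s i j = \<bar>\<theta>0 (i, j)\<bar> powr (q i - 1) * (\<rho> i * amax (lam i) (p0 i))" for i j
  have termwise: "lam i j * \<bar>\<theta>0 (i, j)\<bar> powr q i - lam i j * \<bar>\<theta> (i, j)\<bar> powr q i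
      \<le> (if j < p0 i then s i j * U else 0)" if ij: "i < m" "j < p i" for i j
  proof (cases "j < p0 i")
    case True
    have "\<bar>(\<theta> (i, j) - \<theta>0 (i, j)) / \<rho> i\<bar> \<le> U"
      using abs_le_vnorm[OF finite_idx, of "(i, j)" m p "\<lambda>a. (\<theta> a - \<theta>0 a) / \<rho> (fst a)"] ij
      unfolding U_def by (simp add: mem_idx)
    then have dist: "\<bar>\<theta>0 (i, j) - \<theta> (i, j)\<bar> \<le> \<rho> i * U"
      using \<rho>[OF ij(1)] by (simp add: abs_divide abs_minus_commute divide_le_eq mult.commute)
    have "lam i j * \<bar>\<theta>0 (i, j)\<bar> powr q i - lam i j * \<bar>\<theta> (i, j)\<bar> powr q i
        \<le> lam i j * (\<bar>\<theta>0 (i, j)\<bar> powr (q i - 1) * \<bar>\<theta>0 (i, j) - \<theta> (i, j)\<bar>)"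
      using abs_powr_diff_le[OF nz[OF ij(1) True]] q[OF ij(1)] lam[OF ij]
      by (simp add: right_diff_distrib[symmetric] mult_left_mono)
    also have "\<dots> \<le> amax (lam i) (p0 i) * (\<bar>\<theta>0 (i, j)\<bar> powr (q i - 1) * (\<rho> i * U))"
      using amax_ge[OF True] dist lam[OF ij] amax_nonneg by (intro mult_mono mult_left_mono) auto
    finally show ?thesis using True by (simp add: s_def ac_simps)
  next
    case False
    then show ?thesis using z[OF ij(1) _ ij(2)] lam[OF ij] by simp
  qed
  have "(\<Sum>i<m. \<Sum>j<p i. lam i j * \<bar>\<theta>0 (i, j)\<bar> powr q i) - (\<Sum>i<m. \<Sum>j<p i. lam i j * \<bar>\<theta> (i, j)\<bar> powr q i)
      \<le> (\<Sum>i<m. \<Sum>j<p i. if j < p0 i then s i j * U else 0)"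
    unfolding sum_subtractf[symmetric] using termwise by (intro sum_mono) auto
  also have "\<dots> = (\<Sum>i<m. \<Sum>j<p0 i. s i j * U)"
  proof (rule sum.cong[OF refl])
    fix i assume "i \<in> {..<m}"
    then have "{..<p i} \<inter> {j. j < p0 i} = {..<p0 i}" using p0[of i] by auto
    then show "(\<Sum>j<p i. if j < p0 i then s i j * U else 0) = (\<Sum>j<p0 i. s i j * U)"
      by (simp add: sum.inter_filter[symmetric] Collect_conj_eq[symmetric] lessThan_def)
  qed
  also have "\<dots> = penalty_slope m p0 q \<theta>0 \<rho> lam * U"
    by (simp add: penalty_slope_def s_def sum_distrib_right)
  finally show ?thesis unfolding U_def .
qed

lemma bridge_minimizer_rescaled_bound:
  fixes \<rho> q :: "nat \<Rightarrow> real"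
  assumes \<rho>: "\<And>i. i < m \<Longrightarrow> 0 < \<rho> i" and q: "\<And>i. i < m \<Longrightarrow> 0 < q i \<and> q i \<le> 1"
    and p0: "\<And>i. i < m \<Longrightarrow> p0 i \<le> p i"
    and nz: "\<And>i j. i < m \<Longrightarrow> j < p0 i \<Longrightarrow> \<theta>0 (i, j) \<noteq> 0"
    and z: "\<And>i j. i < m \<Longrightarrow> p0 i \<le> j \<Longrightarrow> j < p i \<Longrightarrow> \<theta>0 (i, j) = 0"
    and lam: "\<And>i j. i < m \<Longrightarrow> j < p i \<Longrightarrow> 0 \<le> lam i j"
    and min: "bridge_obj m p q Gh tt lam \<theta> \<le> bridge_obj m p q Gh tt lam \<theta>0"
    and \<kappa>: "1 \<le> \<kappa>" and G: "coercive (idx m p) (1 / \<kappa>) G"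
    and close: "\<kappa> * mat_l1 (idx m p) (\<lambda>a b. \<rho> (fst a) * Gh a b * \<rho> (fst b) - G a b) \<le> 1 / 2"
  shows "vnorm (idx m p) (\<lambda>a. (\<theta> a - \<theta>0 a) / \<rho> (fst a))
    \<le> \<kappa> * (2 * (2 * mat_l1 (idx m p) G + 1) * vnorm (idx m p) (\<lambda>a. (tt a - \<theta>0 a) / \<rho> (fst a))
      + 2 * penalty_slope m p0 q \<theta>0 \<rho> lam)"
proof -
  let ?V = "vnorm (idx m p) (\<lambda>a. (tt a - \<theta>0 a) / \<rho> (fst a))"
  have "1 / \<kappa> * vnorm (idx m p) (\<lambda>a. (\<theta> a - \<theta>0 a) / \<rho> (fst a))
      \<le> 2 * (2 * mat_l1 (idx m p) G + 1 / \<kappa>) * ?V + 2 * penalty_slope m p0 q \<theta>0 \<rho> lam"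
    using finite_idx G min \<kappa> close unfolding bridge_obj_def
    by (intro rescaled_minimizer_bound[where pen = "\<lambda>\<theta>. \<Sum>i<m. \<Sum>j<p i. lam i j * \<bar>\<theta> (i, j)\<bar> powr q i"]
        bridge_penalty_decrease_le penalty_slope_nonneg)
       (use \<rho> q p0 nz z lam in \<open>auto simp: idx_def field_simps\<close>)
  also have "\<dots> \<le> 2 * (2 * mat_l1 (idx m p) G + 1) * ?V + 2 * penalty_slope m p0 q \<theta>0 \<rho> lam"
    using \<kappa> vnorm_nonneg by (intro add_right_mono mult_right_mono) (auto simp: divide_le_eq)
  finally show ?thesis using \<kappa> by (simp add: divide_le_eq ac_simps)
qed

lemma theta_prod_subset_vclosure: "theta_prod m p Th \<subseteq> vclosure (idx m p) (theta_prod m p Th)"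
  unfolding vclosure_def by (auto simp: theta_prod_def vnorm_def intro!: bexI)

theorem theorem1:
  fixes M :: "'w measure"
    and m :: nat and p p0 :: "nat \<Rightarrow> nat"
    and Th :: "nat \<Rightarrow> (nat \<Rightarrow> real) set"
    and \<theta>0 :: "nat \<times> nat \<Rightarrow> real"
    and tt :: "nat \<Rightarrow> 'w \<Rightarrow> nat \<times> nat \<Rightarrow> real"
    and Gh :: "nat \<Rightarrow> 'w \<Rightarrow> nat \<times> nat \<Rightarrow> nat \<times> nat \<Rightarrow> real"
    and q :: "nat \<Rightarrow> real"
    and lam :: "nat \<Rightarrow> 'w \<Rightarrow> nat \<Rightarrow> nat \<Rightarrow> real"
    and th :: "nat \<Rightarrow> 'w \<Rightarrow> nat \<times> nat \<Rightarrow> real"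
    and r :: "nat \<Rightarrow> nat \<Rightarrow> real"
    and G :: "'w \<Rightarrow> nat \<times> nat \<Rightarrow> nat \<times> nat \<Rightarrow> real"
  assumes M: "prob_space M"
    and m: "m \<ge> 1"
    and Th_vec: "\<And>i. i < m \<Longrightarrow> \<forall>x\<in>Th i. is_vec (p i) x"
    and Th_bdd: "\<And>i. i < m \<Longrightarrow> bounded_vec (p i) (Th i)"
    and Th_cvx: "\<And>i. i < m \<Longrightarrow> convex_vec (Th i)"
    and \<theta>0_in: "\<theta>0 \<in> theta_prod m p Th"
    and p0_le: "\<And>i. i < m \<Longrightarrow> p0 i \<le> p i"
    and \<theta>0_nz: "\<And>i j. i < m \<Longrightarrow> j < p0 i \<Longrightarrow> \<theta>0 (i, j) \<noteq> 0"
    and \<theta>0_z: "\<And>i j. i < m \<Longrightarrow> p0 i \<le> j \<Longrightarrow> j < p i \<Longrightarrow> \<theta>0 (i, j) = 0"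
    and tt_meas: "\<And>n a. a \<in> idx m p \<Longrightarrow> (\<lambda>\<omega>. tt n \<omega> a) \<in> borel_measurable M"
    and tt_supp: "\<And>n \<omega> a. a \<notin> idx m p \<Longrightarrow> tt n \<omega> a = 0"
    and Gh_meas: "\<And>n a b. a \<in> idx m p \<Longrightarrow> b \<in> idx m p \<Longrightarrow>
                    (\<lambda>\<omega>. Gh n \<omega> a b) \<in> borel_measurable M"
    and Gh_pd: "\<And>n. AE \<omega> in M. posdef_mat (idx m p) (Gh n \<omega>)"
    and q: "\<And>i. i < m \<Longrightarrow> 0 < q i \<and> q i \<le> 1"
    and lam_meas: "\<And>n i j. i < m \<Longrightarrow> j < p i \<Longrightarrow> (\<lambda>\<omega>. lam n \<omega> i j) \<in> borel_measurable M"
    and lam_pos: "\<And>n \<omega> i j. \<omega> \<in> space M \<Longrightarrow> i < m \<Longrightarrow> j < p i \<Longrightarrow> lam n \<omega> i j > 0"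
    and th_meas: "\<And>n a. a \<in> idx m p \<Longrightarrow> (\<lambda>\<omega>. th n \<omega> a) \<in> borel_measurable M"
    and th_min: "\<And>n. AE \<omega> in M.
        th n \<omega> \<in> vclosure (idx m p) (theta_prod m p Th) \<and>
        (\<forall>\<theta>\<in>vclosure (idx m p) (theta_prod m p Th).
            bridge_obj m p q (Gh n \<omega>) (tt n \<omega>) (lam n \<omega>) (th n \<omega>)
              \<le> bridge_obj m p q (Gh n \<omega>) (tt n \<omega>) (lam n \<omega>) \<theta>)"
    and r_pos: "\<And>n i. i < m \<Longrightarrow> r n i > 0"
    and r_lim: "\<And>i. i < m \<Longrightarrow> (\<lambda>n. r n i) \<longlonglongrightarrow> 0"
    and G_meas: "\<And>a b. a \<in> idx m p \<Longrightarrow> b \<in> idx m p \<Longrightarrow> (\<lambda>\<omega>. G \<omega> a b) \<in> borel_measurable M"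
    and G_pd: "\<And>\<omega>. \<omega> \<in> space M \<Longrightarrow> posdef_mat (idx m p) (G \<omega>)"
    and A1: "\<And>a b. a \<in> idx m p \<Longrightarrow> b \<in> idx m p \<Longrightarrow>
        conv_in_prob M (\<lambda>n \<omega>. r n (fst a) * Gh n \<omega> a b * r n (fst b)) (\<lambda>\<omega>. G \<omega> a b)"
    and A2: "bounded_in_prob M
        (\<lambda>n \<omega>. vnorm (idx m p) (\<lambda>a. (tt n \<omega> a - \<theta>0 a) / r n (fst a)))"
    and B1: "\<And>i. i < m \<Longrightarrow>
        bounded_in_prob M (\<lambda>n \<omega>. r n i * amax (lam n \<omega> i) (p0 i))"
  shows "bounded_in_prob M
        (\<lambda>n \<omega>. vnorm (idx m p) (\<lambda>a. (th n \<omega> a - \<theta>0 a) / r n (fst a)))"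
proof -
  interpret prob_space M by (rule M)
  let ?I = "idx m p"
  obtain \<kappa> where \<kappa>: "\<kappa> \<in> borel_measurable M" "\<And>\<omega>. \<omega> \<in> space M \<Longrightarrow> 1 \<le> \<kappa> \<omega>"
    "\<And>\<omega>. \<omega> \<in> space M \<Longrightarrow> coercive ?I (1 / \<kappa> \<omega>) (G \<omega>)"
    using random_coercivity_modulus[OF finite_idx G_meas G_pd] by blast
  define Z where "Z n \<omega> = mat_l1 ?I (\<lambda>a b. r n (fst a) * Gh n \<omega> a b * r n (fst b) - G \<omega> a b)" for n \<omega>
  define Y where "Y n \<omega> = \<kappa> \<omega> * (2 * (2 * mat_l1 ?I (G \<omega>) + 1)
    * vnorm ?I (\<lambda>a. (tt n \<omega> a - \<theta>0 a) / r n (fst a))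
    + 2 * penalty_slope m p0 q \<theta>0 (r n) (lam n \<omega>))" for n \<omega>
  have G_bounded: "bounded_in_prob M (\<lambda>n \<omega>. mat_l1 ?I (G \<omega>))"
    unfolding mat_l1_def using G_meas
    by (intro bounded_in_prob_const[OF M] borel_measurable_sum borel_measurable_abs) auto
  have slope_bounded: "bounded_in_prob M (\<lambda>n \<omega>. penalty_slope m p0 q \<theta>0 (r n) (lam n \<omega>))"
    unfolding penalty_slope_def
    by (intro bounded_in_prob_sum[OF M] bounded_in_prob_mult[OF M] bounded_in_prob_const[OF M] B1) auto
  have Y_bounded: "bounded_in_prob M Y"
    unfolding Y_def
    by (intro bounded_in_prob_mult[OF M] bounded_in_prob_add[OF M] G_bounded slope_bounded A2
        bounded_in_prob_const[OF M] \<kappa>(1) borel_measurable_const)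
  have small: "conv_in_prob M (\<lambda>n \<omega>. \<kappa> \<omega> * Z n \<omega>) (\<lambda>_. 0)"
    unfolding Z_def mat_l1_def
    by (intro conv_in_prob_zero_mult_bounded[OF M] bounded_in_prob_const[OF M \<kappa>(1)]
        conv_in_prob_zero_sum[OF M] finite_idx conv_in_prob_abs_diff A1)
  then have B_lim: "(\<lambda>n. measure M {\<omega> \<in> space M. 1 / 2 < \<bar>\<kappa> \<omega> * Z n \<omega>\<bar>}) \<longlonglongrightarrow> 0"
    using half_gt_zero[OF zero_less_one] unfolding conv_in_prob_def diff_zero by blast
  show ?thesis
  proof (rule bounded_in_prob_if_AE_le[OF M _ Y_bounded _ B_lim])
    show "(\<lambda>\<omega>. vnorm ?I (\<lambda>a. (th n \<omega> a - \<theta>0 a) / r n (fst a))) \<in> borel_measurable M" for n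
      using th_meas by (intro borel_measurable_vnorm borel_measurable_divide borel_measurable_diff) auto
    show "{\<omega> \<in> space M. 1 / 2 < \<bar>\<kappa> \<omega> * Z n \<omega>\<bar>} \<in> sets M" for n
      using small unfolding conv_in_prob_def by (intro sets_abs_gt) blast
    show "AE \<omega> in M. \<omega> \<notin> {\<omega> \<in> space M. 1 / 2 < \<bar>\<kappa> \<omega> * Z n \<omega>\<bar>} \<longrightarrow>
        \<bar>vnorm ?I (\<lambda>a. (th n \<omega> a - \<theta>0 a) / r n (fst a))\<bar> \<le> Y n \<omega>" for n
      using th_min[of n] AE_space
    proof eventually_elim
      case (elim \<omega>)
      then have \<omega>: "\<omega> \<in> space M" by simp
      have min: "bridge_obj m p q (Gh n \<omega>) (tt n \<omega>) (lam n \<omega>) (th n \<omega>)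
          \<le> bridge_obj m p q (Gh n \<omega>) (tt n \<omega>) (lam n \<omega>) \<theta>0"
        using elim \<theta>0_in theta_prod_subset_vclosure[of m p Th] by blast
      have "vnorm ?I (\<lambda>a. (th n \<omega> a - \<theta>0 a) / r n (fst a)) \<le> Y n \<omega>" if "\<kappa> \<omega> * Z n \<omega> \<le> 1 / 2"
        using that min \<kappa>(2,3)[OF \<omega>] lam_pos[OF \<omega>] unfolding Y_def Z_def
        by (intro bridge_minimizer_rescaled_bound) (use r_pos q p0_le \<theta>0_nz \<theta>0_z in \<open>auto intro: less_imp_le\<close>)
      then show ?case using \<omega> by (auto simp: vnorm_nonneg not_less abs_le_iff)
    qed
  qed
qed

end
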